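(* Let $\mathcal{A}$ be a probabilistic automaton with state set $Q$. Its Markov monoid is consistent with $\mathcal{A}$: for every limit-word $\mathbf{u}$ in the Markov monoid of $\mathcal{A}$ there exists a sequence of words $(u_n)_{n\in\mathbb{N}}$ which reifies $\mathbf{u}$, i.e. for all states $s,t\in Q$ the sequence $(\mathbb{P}_{\mathcal{A}}(s\xrightarrow{u_n}t))_{n}$ converges and $\mathbf{u}(s,t)=1 \iff \lim_n \mathbb{P}_{\mathcal{A}}(s\xrightarrow{u_n}t)>0$.
   Context: Fix a finite alphabet $A$. A probabilistic automaton is $\mathcal{A}=(Q,q_0,\Delta,F)$ with $Q$ finite, $q_0\in Q$, $F\subseteq Q$ and $\Delta: Q\times A\to\mathcal{D}(Q)$ ($\mathcal{D}(Q)$ the probability distributions on $Q$). For $a\in A$ let $M_a(s,t)=\Delta(s,a)(t)$, for $u=a_0\cdots a_{n-1}$ let $M_u=M_{a_0}\cdots M_{a_{n-1}}$ (identity for the empty word), and $\mathbb{P}_{\mathcal{A}}(s\xrightarrow{u}t)=M_u(s,t)$. A limit-word is a map $\mathbf{u}:Q\times Q\to\{0,1\}$ such that for every $s$ there is $t$ with $\mathbf{u}(s,t)=1$. The concatenation $\mathbf{u}\cdot\mathbf{v}$ is given by $(\mathbf{u}\cdot\mathbf{v})(s,t)=1$ iff there exists $q$ with $\mathbf{u}(s,q)=1$ and $\mathbf{v}(q,t)=1$. A limit-word $\mathbf{u}$ is idempotent if $\mathbf{u}\cdot\mathbf{u}=\mathbf{u}$; for idempotent $\mathbf{u}$, a state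 $s$ is $\mathbf{u}$-recurrent if for all $t$, $\mathbf{u}(s,t)=1$ implies $\mathbf{u}(t,s)=1$, and the iteration $\mathbf{u}^\sharp$ is defined by $\mathbf{u}^\sharp(s,t)=1$ iff $\mathbf{u}(s,t)=1$ and $t$ is $\mathbf{u}$-recurrent. For $a\in A$, the limit-word $\mathbf{a}$ is given by $\mathbf{a}(s,t)=1$ iff $\Delta(s,a)(t)>0$, and $\mathbf{1}$ is the identity limit-word ($\mathbf{1}(s,t)=1$ iff $s=t$). The Markov monoid of $\mathcal{A}$ is the smallest set of limit-words containing $\{\mathbf{a}\mid a\in A\}\cup\{\mathbf{1}\}$ and closed under concatenation and under iteration of idempotent elements. *)

theory Defs
  imports "HOL-Probability.Probability"
begin

text \<open>Transition function of a probabilistic automaton: Delta s a is the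
distribution of successor states. States 'q finite, letters 'a finite.
Initial state and final states play no role in the statement.\<close>

text \<open>P(s --u--> t) = M_u(s,t), M_u = M_a0 ... M_a(n-1).\<close>
fun word_prob :: "('q::finite \<Rightarrow> 'a \<Rightarrow> 'q pmf) \<Rightarrow> 'a list \<Rightarrow> 'q \<Rightarrow> 'q \<Rightarrow> real" where
  "word_prob Delta [] s t = (if s = t then 1 else 0)"
| "word_prob Delta (a # u) s t = (\<Sum>q\<in>UNIV. pmf (Delta s a) q * word_prob Delta u q t)"

type_synonym 'q limit_word = "'q \<Rightarrow> 'q \<Rightarrow> bool"

definition is_limit_word :: "'q limit_word \<Rightarrow> bool" where
  "is_limit_word u \<longleftrightarrow> (\<forall>s. \<exists>t. u s t)"

definition lw_concat :: "'q limit_word \<Rightarrow> 'q limit_word \<Rightarrow> 'q limit_word" where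
  "lw_concat u v = (\<lambda>s t. \<exists>q. u s q \<and> v q t)"

definition lw_idempotent :: "'q limit_word \<Rightarrow> bool" where
  "lw_idempotent u \<longleftrightarrow> lw_concat u u = u"

definition lw_recurrent :: "'q limit_word \<Rightarrow> 'q \<Rightarrow> bool" where
  "lw_recurrent u s \<longleftrightarrow> (\<forall>t. u s t \<longrightarrow> u t s)"

definition lw_iter :: "'q limit_word \<Rightarrow> 'q limit_word" where
  "lw_iter u = (\<lambda>s t. u s t \<and> lw_recurrent u t)"

definition letter_lw :: "('q \<Rightarrow> 'a \<Rightarrow> 'q pmf) \<Rightarrow> 'a \<Rightarrow> 'q limit_word" where
  "letter_lw Delta a = (\<lambda>s t. pmf (Delta s a) t > 0)"

definition lw_one :: "'q limit_word" where
  "lw_one = (\<lambda>s t. s = t)"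

inductive_set markov_monoid :: "('q \<Rightarrow> 'a \<Rightarrow> 'q pmf) \<Rightarrow> 'q limit_word set"
  for Delta where
  letter: "letter_lw Delta a \<in> markov_monoid Delta"
| one: "lw_one \<in> markov_monoid Delta"
| concat: "u \<in> markov_monoid Delta \<Longrightarrow> v \<in> markov_monoid Delta \<Longrightarrow> lw_concat u v \<in> markov_monoid Delta"
| iter: "u \<in> markov_monoid Delta \<Longrightarrow> lw_idempotent u \<Longrightarrow> lw_iter u \<in> markov_monoid Delta"

definition reifies :: "('q::finite \<Rightarrow> 'a \<Rightarrow> 'q pmf) \<Rightarrow> (nat \<Rightarrow> 'a list) \<Rightarrow> 'q limit_word \<Rightarrow> bool" where
  "reifies Delta us u \<longleftrightarrow> (\<forall>s t. convergent (\<lambda>n. word_prob Delta (us n) s t) \<and>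
       (u s t \<longleftrightarrow> lim (\<lambda>n. word_prob Delta (us n) s t) > 0))"

end

theory Submission
  imports Defs
begin

text \<open>Induction on the Markov monoid, keeping as invariant that the limit matrix of the
reifying sequence is stochastic and has the limit-word as its support. Letters and the
empty word are reified by constant sequences, and concatenation by concatenating
the sequences, since supports of nonnegative matrices multiply like limit-words.
For an idempotent \<open>u\<close> reified with limit \<open>L\<close>, the powers \<open>L\<^sup>k\<close> all have support \<open>u\<close>;
each row puts mass at least \<open>\<delta>\<close> (the least positive entry of \<open>L\<close>) on some recurrent
state, which the chain never leaves, so the mass on transient states decays like
\<open>(1 - \<delta>)\<^sup>k\<close>, while entries from \<open>s\<close> into a recurrent \<open>t\<close> with \<open>u s t\<close> stay above \<open>\<delta>\<^sup>2\<close>.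
Any limit point of \<open>(L\<^sup>k)\<close> therefore has support \<open>u\<^sup>\<sharp>\<close>, and a diagonal argument
replaces \<open>L\<^sup>k\<close> by the matrix of the word \<open>(u\<^sub>n)\<^sup>k\<close> for suitable large \<open>n\<close>.\<close>

definition mat_mul :: "('q::finite \<Rightarrow> 'q \<Rightarrow> real) \<Rightarrow> ('q \<Rightarrow> 'q \<Rightarrow> real) \<Rightarrow> 'q \<Rightarrow> 'q \<Rightarrow> real" where
  "mat_mul A B = (\<lambda>s t. \<Sum>q\<in>UNIV. A s q * B q t)"

definition mat_id :: "'q \<Rightarrow> 'q \<Rightarrow> real" where
  "mat_id = (\<lambda>s t. if s = t then 1 else 0)"

fun mat_pow :: "('q::finite \<Rightarrow> 'q \<Rightarrow> real) \<Rightarrow> nat \<Rightarrow> 'q \<Rightarrow> 'q \<Rightarrow> real" where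
  "mat_pow A 0 = mat_id"
| "mat_pow A (Suc k) = mat_mul A (mat_pow A k)"

definition stochastic :: "('q::finite \<Rightarrow> 'q \<Rightarrow> real) \<Rightarrow> bool" where
  "stochastic A \<longleftrightarrow> (\<forall>s t. 0 \<le> A s t) \<and> (\<forall>s. (\<Sum>t\<in>UNIV. A s t) = 1)"

definition support_lw :: "('q \<Rightarrow> 'q \<Rightarrow> real) \<Rightarrow> 'q limit_word" where
  "support_lw A = (\<lambda>s t. 0 < A s t)"

lemma sum_pos_iff_ex_pos:
  fixes f :: "'i \<Rightarrow> real"
  assumes "finite A" and "\<And>x. x \<in> A \<Longrightarrow> 0 \<le> f x"
  shows "0 < sum f A \<longleftrightarrow> (\<exists>x\<in>A. 0 < f x)"
  using sum_nonneg_eq_0_iff[OF assms] sum_nonneg[of A f] assms by (force simp: less_le)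

lemma mat_mul_assoc: "mat_mul (mat_mul A B) C = mat_mul A (mat_mul B C)"
  unfolding mat_mul_def
  by (intro ext) (simp add: sum_distrib_left sum_distrib_right mult.assoc, rule sum.swap)

lemma mat_mul_id_left [simp]: "mat_mul mat_id A = A"
  by (simp add: mat_mul_def mat_id_def if_distrib[of "\<lambda>x. x * _"] cong: if_cong)

lemma mat_mul_id_right [simp]: "mat_mul A mat_id = A"
  by (simp add: mat_mul_def mat_id_def if_distrib[of "\<lambda>x. _ * x"] cong: if_cong)

lemma mat_pow_Suc_right: "mat_pow A (Suc k) = mat_mul (mat_pow A k) A"
proof (induction k)
  case 0
  show ?case
    by simp
next
  case (Suc k)
  have "mat_pow A (Suc (Suc k)) = mat_mul A (mat_mul (mat_pow A k) A)"
    using Suc.IH by (metis mat_pow.simps(2))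
  then show ?case
    by (simp add: mat_mul_assoc)
qed

lemma tendsto_mat_mul:
  assumes "\<And>s t. (\<lambda>n. A n s t) \<longlonglongrightarrow> A' s t" and "\<And>s t. (\<lambda>n. B n s t) \<longlonglongrightarrow> B' s t"
  shows "(\<lambda>n. mat_mul (A n) (B n) s t) \<longlonglongrightarrow> mat_mul A' B' s t"
  unfolding mat_mul_def by (intro tendsto_sum tendsto_mult assms)

lemma tendsto_mat_pow:
  assumes "\<And>s t. (\<lambda>n. A n s t) \<longlonglongrightarrow> A' s t"
  shows "(\<lambda>n. mat_pow (A n) k s t) \<longlonglongrightarrow> mat_pow A' k s t"
  by (induction k arbitrary: s t) (simp_all add: tendsto_mat_mul assms)

lemma support_lw_mat_mul:
  assumes "\<And>s t. 0 \<le> A s t" and "\<And>s t. 0 \<le> B s t"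
  shows "support_lw (mat_mul A B) = lw_concat (support_lw A) (support_lw B)"
proof (intro ext)
  fix s t
  have "0 < mat_mul A B s t \<longleftrightarrow> (\<exists>q. 0 < A s q * B q t)"
    unfolding mat_mul_def using assms by (simp add: sum_pos_iff_ex_pos)
  also have "\<dots> \<longleftrightarrow> (\<exists>q. 0 < A s q \<and> 0 < B q t)"
    using assms by (metis mult_pos_pos mult_eq_0_iff order_less_le)
  finally show "support_lw (mat_mul A B) s t = lw_concat (support_lw A) (support_lw B) s t"
    by (simp add: support_lw_def lw_concat_def)
qed

lemma stochastic_mat_id: "stochastic (mat_id :: 'q::finite \<Rightarrow> 'q \<Rightarrow> real)"
  by (simp add: stochastic_def mat_id_def)

lemma stochastic_mat_mul:
  assumes "stochastic A" and "stochastic B"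
  shows "stochastic (mat_mul A B)"
proof -
  have "(\<Sum>t\<in>UNIV. mat_mul A B s t) = (\<Sum>q\<in>UNIV. A s q * (\<Sum>t\<in>UNIV. B q t))" for s
    by (simp add: mat_mul_def sum_distrib_left) (rule sum.swap)
  then show ?thesis
    using assms by (auto simp: stochastic_def mat_mul_def intro: sum_nonneg)
qed

lemma stochastic_mat_pow: "stochastic A \<Longrightarrow> stochastic (mat_pow A k)"
  by (induction k) (simp_all add: stochastic_mat_id stochastic_mat_mul)

lemma stochastic_le_1:
  assumes "stochastic A"
  shows "A s t \<le> 1"
proof -
  have "A s t \<le> (\<Sum>t\<in>UNIV. A s t)"
    using assms by (intro member_le_sum) (auto simp: stochastic_def)
  then show ?thesis
    using assms by (simp add: stochastic_def)
qed

lemma stochastic_limit: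
  assumes "\<And>n. stochastic (A n)" and "\<And>s t. (\<lambda>n. A n s t) \<longlonglongrightarrow> L s t"
  shows "stochastic L"
  unfolding stochastic_def
proof safe
  show "0 \<le> L s t" for s t
    using assms by (intro LIMSEQ_le_const[OF assms(2)]) (auto simp: stochastic_def)
  have "(\<lambda>n. \<Sum>t\<in>UNIV. A n s t) \<longlonglongrightarrow> (\<Sum>t\<in>UNIV. L s t)" for s
    by (intro tendsto_sum assms)
  then show "(\<Sum>t\<in>UNIV. L s t) = 1" for s
    using assms(1) by (simp add: stochastic_def LIMSEQ_const_iff)
qed

lemma is_limit_word_support_lw:
  assumes "stochastic A"
  shows "is_limit_word (support_lw A)"
  unfolding is_limit_word_def
proof
  fix s
  have "0 < (\<Sum>t\<in>UNIV. A s t)"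
    using assms by (simp add: stochastic_def)
  then show "\<exists>t. support_lw A s t"
    using assms by (subst (asm) sum_pos_iff_ex_pos) (auto simp: stochastic_def support_lw_def)
qed

lemma bounded_vec_seq_convergent_subseq:
  fixes A :: "nat \<Rightarrow> 'i::finite \<Rightarrow> real"
  assumes "\<And>k i. \<bar>A k i\<bar> \<le> B"
  shows "\<exists>r l. strict_mono r \<and> (\<forall>i. (\<lambda>j. A (r j) i) \<longlonglongrightarrow> l i)"
proof -
  define f :: "nat \<Rightarrow> real ^ 'i" where "f k = (\<chi> i. A k i)" for k
  have "norm (f k) \<le> CARD('i) * B" for k
  proof -
    have "norm (f k) \<le> (\<Sum>i\<in>UNIV. \<bar>f k $ i\<bar>)"
      by (rule norm_le_l1_cart)
    also have "\<dots> \<le> (\<Sum>i\<in>(UNIV :: 'i set). B)"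
      by (intro sum_mono) (simp add: f_def assms)
    finally show ?thesis
      by simp
  qed
  then have "bounded (range f)"
    unfolding bounded_iff by blast
  then obtain l r where r: "strict_mono r" and lim: "(f \<circ> r) \<longlonglongrightarrow> l"
    using bounded_imp_convergent_subsequence by blast
  have "(\<lambda>j. A (r j) i) \<longlonglongrightarrow> l $ i" for i
    using tendsto_vec_nth[OF lim, of i] by (simp add: f_def comp_def)
  then show ?thesis
    using r by blast
qed

lemma diagonal_tendsto:
  fixes F :: "nat \<Rightarrow> nat \<Rightarrow> 'i::finite \<Rightarrow> real"
  assumes "\<And>j i. (\<lambda>n. F n j i) \<longlonglongrightarrow> G j i" and "\<And>i. (\<lambda>j. G j i) \<longlonglongrightarrow> H i"
  shows "\<exists>N. \<forall>i. (\<lambda>j. F (N j) j i) \<longlonglongrightarrow> H i"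
proof -
  have "\<forall>\<^sub>F n in sequentially. \<forall>i. dist (F n j i) (G j i) < inverse (Suc j)" for j
    by (intro eventually_all_finite allI tendstoD assms) simp
  then have "\<forall>j. \<exists>n. \<forall>i. dist (F n j i) (G j i) < inverse (Suc j)"
    unfolding eventually_sequentially by (meson order_refl)
  then obtain N where N: "\<And>j i. dist (F (N j) j i) (G j i) < inverse (Suc j)"
    using choice[of "\<lambda>j n. \<forall>i. dist (F n j i) (G j i) < inverse (Suc j)"] by blast
  have "(\<lambda>j. F (N j) j i - G j i) \<longlonglongrightarrow> 0" for i
  proof (rule Lim_null_comparison[OF _ LIMSEQ_inverse_real_of_nat])
    show "\<forall>\<^sub>F j in sequentially. norm (F (N j) j i - G j i) \<le> inverse (Suc j)"
      using N by (intro always_eventually allI) (simp add: dist_real_def less_imp_le)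
  qed
  then have "(\<lambda>j. (F (N j) j i - G j i) + G j i) \<longlonglongrightarrow> 0 + H i" for i
    by (intro tendsto_add assms(2))
  then show ?thesis
    by auto
qed

lemma word_prob_Nil: "word_prob Delta [] = mat_id"
  by (simp add: mat_id_def fun_eq_iff)

lemma word_prob_Cons: "word_prob Delta (a # u) = mat_mul (\<lambda>s t. pmf (Delta s a) t) (word_prob Delta u)"
  by (simp add: mat_mul_def fun_eq_iff)

lemma word_prob_append: "word_prob Delta (u @ v) = mat_mul (word_prob Delta u) (word_prob Delta v)"
  by (induction u) (simp_all only: append.simps word_prob_Nil word_prob_Cons mat_mul_id_left mat_mul_assoc)

lemma word_prob_replicate: "word_prob Delta (concat (replicate k w)) = mat_pow (word_prob Delta w) k"
  by (induction k) (simp_all add: word_prob_Nil word_prob_append)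

lemma word_prob_single: "word_prob Delta [a] s t = pmf (Delta s a) t"
  by (simp add: if_distrib cong: if_cong)

lemma stochastic_word_prob: "stochastic (word_prob Delta u)"
proof (induction u)
  case Nil
  show ?case
    by (simp add: word_prob_Nil stochastic_mat_id)
next
  case (Cons a u)
  have "stochastic (\<lambda>s t. pmf (Delta s a) t)"
    by (simp add: stochastic_def sum_pmf_eq_1)
  then show ?case
    by (simp only: word_prob_Cons stochastic_mat_mul Cons)
qed

lemma reifies_iff_support:
  "reifies Delta us u \<longleftrightarrow>
     (\<exists>L. (\<forall>s t. (\<lambda>n. word_prob Delta (us n) s t) \<longlonglongrightarrow> L s t) \<and> u = support_lw L)"
proof
  assume "reifies Delta us u"
  then show "\<exists>L. (\<forall>s t. (\<lambda>n. word_prob Delta (us n) s t) \<longlonglongrightarrow> L s t) \<and> u = support_lw L"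
    by (intro exI[of _ "\<lambda>s t. lim (\<lambda>n. word_prob Delta (us n) s t)"])
      (auto simp: reifies_def support_lw_def convergent_LIMSEQ_iff)
next
  assume "\<exists>L. (\<forall>s t. (\<lambda>n. word_prob Delta (us n) s t) \<longlonglongrightarrow> L s t) \<and> u = support_lw L"
  then obtain L where L: "\<And>s t. (\<lambda>n. word_prob Delta (us n) s t) \<longlonglongrightarrow> L s t" and "u = support_lw L"
    by blast
  then show "reifies Delta us u"
    by (auto simp: reifies_def support_lw_def limI[OF L] intro: convergentI)
qed

lemma reifies_limit_stochastic:
  assumes "\<And>s t. (\<lambda>n. word_prob Delta (us n) s t) \<longlonglongrightarrow> L s t"
  shows "stochastic L"
  using stochastic_limit[OF stochastic_word_prob assms] .

subsection \<open>Idempotent limit-words and recurrent states\<close>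

lemma lw_idempotent_trans:
  assumes "lw_idempotent u" and "u s q" and "u q t"
  shows "u s t"
proof -
  have "lw_concat u u s t"
    using assms(2,3) unfolding lw_concat_def by blast
  then show ?thesis
    using assms(1) unfolding lw_idempotent_def by simp
qed

lemma lw_recurrent_step:
  assumes "lw_idempotent u" and "lw_recurrent u r" and "u r t"
  shows "lw_recurrent u t"
  unfolding lw_recurrent_def
proof (intro allI impI)
  fix x
  assume "u t x"
  then have "u x r"
    using assms lw_idempotent_trans unfolding lw_recurrent_def by metis
  then show "u x t"
    by (rule lw_idempotent_trans[OF assms(1) _ assms(3)])
qed

text \<open>A successor of \<open>s\<close> whose set of successors is smallest is recurrent.\<close>

lemma lw_idempotent_ex_recurrent:
  fixes u :: "'q::finite limit_word"
  assumes "lw_idempotent u" and "is_limit_word u"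
  shows "\<exists>r. u s r \<and> lw_recurrent u r"
proof -
  define succs where "succs t = insert t {x. u t x}" for t
  obtain t0 where "u s t0"
    using assms(2) unfolding is_limit_word_def by blast
  then obtain t where t: "u s t" and t_min: "\<And>y. u s y \<Longrightarrow> card (succs t) \<le> card (succs y)"
    using ex_has_least_nat[of "u s" t0 "\<lambda>t. card (succs t)"] by blast
  have "u x t" if "u t x" for x
  proof (rule ccontr)
    assume "\<not> u x t"
    have "succs x \<subseteq> succs t"
      using that lw_idempotent_trans[OF assms(1)] unfolding succs_def by blast
    moreover have "t \<notin> succs x" and "t \<in> succs t"
      using that \<open>\<not> u x t\<close> unfolding succs_def by auto
    ultimately have "succs x \<subset> succs t"
      by blast
    then have "card (succs x) < card (succs t)"
      by (simp add: psubset_card_mono)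
    moreover have "u s x"
      using lw_idempotent_trans[OF assms(1) t that] .
    ultimately show False
      using t_min by fastforce
  qed
  then show ?thesis
    using t unfolding lw_recurrent_def by blast
qed

lemma lw_recurrent_self:
  assumes "lw_idempotent u" and "is_limit_word u" and "lw_recurrent u t"
  shows "u t t"
proof -
  obtain x where "u t x"
    using assms(2) unfolding is_limit_word_def by blast
  moreover have "u x t"
    using assms(3) calculation unfolding lw_recurrent_def by blast
  ultimately show ?thesis
    by (rule lw_idempotent_trans[OF assms(1)])
qed

subsection \<open>Powers of a stochastic matrix with idempotent support\<close>

definition min_pos_entry :: "('q::finite \<Rightarrow> 'q \<Rightarrow> real) \<Rightarrow> real" where
  "min_pos_entry A = Min {A s t |s t. 0 < A s t}"

lemma min_pos_entry:
  assumes "stochastic A"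
  shows "0 < min_pos_entry A" and "min_pos_entry A \<le> 1"
    and "0 < A s t \<Longrightarrow> min_pos_entry A \<le> A s t"
proof -
  let ?E = "{A s t |s t. 0 < A s t}"
  have "?E \<subseteq> range (\<lambda>(s, t). A s t)"
    by auto
  then have fin: "finite ?E"
    by (rule finite_subset) simp
  obtain t0 where "0 < A undefined t0"
    using is_limit_word_support_lw[OF assms] unfolding is_limit_word_def support_lw_def by blast
  then have "?E \<noteq> {}"
    by blast
  from Min_in[OF fin this] obtain s' t' where "min_pos_entry A = A s' t'" "0 < A s' t'"
    unfolding min_pos_entry_def by blast
  then show "0 < min_pos_entry A" and "min_pos_entry A \<le> 1"
    using stochastic_le_1[OF assms] by auto
  show "0 < A s t \<Longrightarrow> min_pos_entry A \<le> A s t"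
    unfolding min_pos_entry_def using fin by (intro Min_le) auto
qed

context
  fixes L :: "'q::finite \<Rightarrow> 'q \<Rightarrow> real" and u :: "'q limit_word"
  assumes stochastic_L: "stochastic L"
    and u_def: "u = support_lw L"
    and idempotent_u: "lw_idempotent u"
begin

abbreviation "\<delta> \<equiv> min_pos_entry L"

lemma is_limit_word_u: "is_limit_word u"
  using is_limit_word_support_lw[OF stochastic_L] by (simp add: u_def)

lemma nonneg_mat_pow: "0 \<le> mat_pow L k s t"
  using stochastic_mat_pow[OF stochastic_L] by (simp add: stochastic_def)

lemma support_lw_mat_pow_Suc: "support_lw (mat_pow L (Suc k)) = u"
proof (induction k)
  case 0
  show ?case
    by (simp add: u_def)
next
  case (Suc k)
  have "support_lw (mat_pow L (Suc (Suc k))) = lw_concat u u"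
    using Suc stochastic_L nonneg_mat_pow
    by (simp only: mat_pow.simps(2)[of L "Suc k"] support_lw_mat_mul stochastic_def u_def)
  then show ?case
    using idempotent_u by (simp add: lw_idempotent_def)
qed

lemma mat_pow_pos_iff:
  assumes "0 < k"
  shows "0 < mat_pow L k s t \<longleftrightarrow> u s t"
proof -
  obtain j where "k = Suc j"
    using assms gr0_implies_Suc by blast
  then show ?thesis
    using fun_cong[OF fun_cong[OF support_lw_mat_pow_Suc[of j]], of s t]
    by (simp add: support_lw_def del: mat_pow.simps)
qed

lemma le_entry_if_support: "u s t \<Longrightarrow> \<delta> \<le> L s t"
  using min_pos_entry(3)[OF stochastic_L] by (simp add: u_def support_lw_def)

lemma mat_pow_recurrent_to_transient:
  assumes "lw_recurrent u q" and "\<not> lw_recurrent u t"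
  shows "mat_pow L k q t = 0"
proof (cases k)
  case 0
  then show ?thesis
    using assms by (auto simp: mat_id_def)
next
  case (Suc m)
  then have "\<not> 0 < mat_pow L k q t"
    using mat_pow_pos_iff assms lw_recurrent_step[OF idempotent_u] by blast
  then show ?thesis
    using nonneg_mat_pow[of k q t] by linarith
qed

lemma transient_mass_decay:
  "(\<Sum>t | \<not> lw_recurrent u t. mat_pow L k s t) \<le> (1 - \<delta>) ^ k"
proof (induction k arbitrary: s)
  case 0
  show ?case
    by (simp add: mat_id_def sum_nonneg)
next
  case (Suc k)
  let ?T = "{t. \<not> lw_recurrent u t}"
  let ?mass = "\<lambda>q. \<Sum>t\<in>?T. mat_pow L k q t"
  obtain r where r: "u s r" "lw_recurrent u r"
    using lw_idempotent_ex_recurrent[OF idempotent_u is_limit_word_u] by blast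
  have L_nonneg: "0 \<le> L s q" for q
    using stochastic_L by (simp add: stochastic_def)
  have "(\<Sum>t\<in>?T. mat_pow L (Suc k) s t) = (\<Sum>q\<in>UNIV. L s q * ?mass q)"
    by (simp add: mat_mul_def sum_distrib_left) (rule sum.swap)
  also have "\<dots> = (\<Sum>q\<in>UNIV - {r}. L s q * ?mass q)"
    using mat_pow_recurrent_to_transient[OF r(2)] by (simp add: sum.remove[of UNIV r])
  also have "\<dots> \<le> (\<Sum>q\<in>UNIV - {r}. L s q) * (1 - \<delta>) ^ k"
    unfolding sum_distrib_right by (intro sum_mono mult_left_mono Suc.IH L_nonneg)
  also have "(\<Sum>q\<in>UNIV - {r}. L s q) = 1 - L s r"
    using stochastic_L sum.remove[of UNIV r "L s"] by (simp add: stochastic_def)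
  also have "(1 - L s r) * (1 - \<delta>) ^ k \<le> (1 - \<delta>) * (1 - \<delta>) ^ k"
    using le_entry_if_support[OF r(1)] min_pos_entry(2)[OF stochastic_L]
    by (intro mult_right_mono) auto
  finally show ?case
    by simp
qed

lemma mat_pow_to_transient_tendsto_0:
  assumes "\<not> lw_recurrent u t"
  shows "(\<lambda>k. mat_pow L k s t) \<longlonglongrightarrow> 0"
proof (rule Lim_null_comparison)
  show "\<forall>\<^sub>F k in sequentially. norm (mat_pow L k s t) \<le> (1 - \<delta>) ^ k"
  proof (intro always_eventually allI)
    fix k
    have "mat_pow L k s t \<le> (\<Sum>t | \<not> lw_recurrent u t. mat_pow L k s t)"
      using assms by (intro member_le_sum) (auto simp: nonneg_mat_pow)
    then show "norm (mat_pow L k s t) \<le> (1 - \<delta>) ^ k"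
      using transient_mass_decay[of k s] nonneg_mat_pow[of k s t] by simp
  qed
  show "(\<lambda>k. (1 - \<delta>) ^ k) \<longlonglongrightarrow> 0"
    using min_pos_entry(1,2)[OF stochastic_L] by (intro LIMSEQ_power_zero) auto
qed

text \<open>Every state reachable in \<open>k\<close> steps from \<open>x\<close> lies in the class of \<open>t\<close>, and from
there \<open>t\<close> is reached in one step with probability at least \<open>\<delta>\<close>.\<close>

lemma mat_pow_to_recurrent_lower_bound:
  assumes "lw_recurrent u t" and "u t x"
  shows "\<delta> \<le> mat_pow L (Suc k) x t"
proof -
  have "mat_pow L k x y * \<delta> \<le> mat_pow L k x y * L y t" for y
  proof (cases "0 < mat_pow L k x y")
    case True
    have "u t y"
    proof (cases k)
      case 0
      then show ?thesis
        using True assms(2) by (simp add: mat_id_def split: if_splits)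
    next
      case (Suc j)
      then have "u x y"
        using True mat_pow_pos_iff by blast
      then show ?thesis
        by (rule lw_idempotent_trans[OF idempotent_u assms(2)])
    qed
    then show ?thesis
      using assms(1) le_entry_if_support True unfolding lw_recurrent_def
      by (intro mult_left_mono) auto
  next
    case False
    then show ?thesis
      using nonneg_mat_pow[of k x y] by simp
  qed
  then have "(\<Sum>y\<in>UNIV. mat_pow L k x y * \<delta>) \<le> mat_pow L (Suc k) x t"
    unfolding mat_pow_Suc_right mat_mul_def by (rule sum_mono)
  moreover have "(\<Sum>y\<in>UNIV. mat_pow L k x y * \<delta>) = \<delta>"
    using stochastic_mat_pow[OF stochastic_L, of k] by (simp add: stochastic_def sum_distrib_right[symmetric])
  ultimately show ?thesis
    by simp
qed

lemma mat_pow_iter_lower_bound: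
  assumes "lw_iter u s t" and "0 < k"
  shows "\<delta> * \<delta> \<le> mat_pow L k s t"
proof -
  have ust: "u s t" and rec: "lw_recurrent u t"
    using assms(1) by (auto simp: lw_iter_def)
  have \<delta>: "0 < \<delta>" "\<delta> \<le> 1"
    using min_pos_entry(1,2)[OF stochastic_L] by auto
  show ?thesis
  proof (cases "k = 1")
    case True
    have "\<delta> * \<delta> \<le> \<delta>"
      using \<delta> by (intro mult_left_le) auto
    also have "\<dots> \<le> mat_pow L k s t"
      using le_entry_if_support[OF ust] True by simp
    finally show ?thesis .
  next
    case False
    then obtain j where k: "k = Suc (Suc j)"
      using assms(2) by (metis One_nat_def gr0_implies_Suc not0_implies_Suc)
    have "u t t"
      using lw_recurrent_self[OF idempotent_u is_limit_word_u rec] .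
    then have "\<delta> * \<delta> \<le> L s t * mat_pow L (Suc j) t t"
      using le_entry_if_support[OF ust] mat_pow_to_recurrent_lower_bound[OF rec] \<delta>
      by (intro mult_mono) auto
    also have "\<dots> \<le> mat_pow L k s t"
      unfolding k mat_pow.simps(2)[of L "Suc j"] mat_mul_def
      using stochastic_L nonneg_mat_pow
      by (intro member_le_sum[where f = "\<lambda>q. L s q * mat_pow L (Suc j) q t"])
        (auto simp: stochastic_def simp del: mat_pow.simps)
    finally show ?thesis .
  qed
qed

lemma mat_pow_subseq_limit_support:
  "\<exists>r M. (\<forall>s t. (\<lambda>j. mat_pow L (r j) s t) \<longlonglongrightarrow> M s t) \<and> lw_iter u = support_lw M"
proof -
  obtain r M where r: "strict_mono r" and lim: "\<And>s t. (\<lambda>j. mat_pow L (r j) s t) \<longlonglongrightarrow> M s t"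
    using bounded_vec_seq_convergent_subseq[of "\<lambda>k (s, t). mat_pow L k s t" 1]
      nonneg_mat_pow stochastic_le_1[OF stochastic_mat_pow[OF stochastic_L]] by fastforce
  have r_pos: "0 < r j" if "1 \<le> j" for j
    using seq_suble[OF r, of j] that by simp
  have "lw_iter u s t \<longleftrightarrow> 0 < M s t" for s t
  proof
    assume "lw_iter u s t"
    then have "\<delta> * \<delta> \<le> M s t"
      using r_pos mat_pow_iter_lower_bound by (intro LIMSEQ_le_const[OF lim[of s t]]) blast
    moreover have "0 < \<delta> * \<delta>"
      using min_pos_entry(1)[OF stochastic_L] by simp
    ultimately show "0 < M s t"
      by linarith
  next
    assume M_pos: "0 < M s t"
    have "u s t"
    proof (rule ccontr)
      assume "\<not> u s t"
      then have "mat_pow L (r j) s t \<le> 0" if "1 \<le> j" for j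
        using mat_pow_pos_iff[OF r_pos[OF that], of s t] by (simp add: not_less[symmetric])
      then have "M s t \<le> 0"
        by (intro LIMSEQ_le_const2[OF lim]) blast
      then show False
        using M_pos by simp
    qed
    moreover have "lw_recurrent u t"
    proof (rule ccontr)
      assume "\<not> lw_recurrent u t"
      then have "(\<lambda>j. mat_pow L (r j) s t) \<longlonglongrightarrow> 0"
        using LIMSEQ_subseq_LIMSEQ[OF mat_pow_to_transient_tendsto_0 r] by (simp add: comp_def)
      then show False
        using M_pos lim LIMSEQ_unique by fastforce
    qed
    ultimately show "lw_iter u s t"
      by (simp add: lw_iter_def)
  qed
  then have "lw_iter u = support_lw M"
    by (simp add: support_lw_def fun_eq_iff)
  then show ?thesis
    using lim by blast
qed

end

subsection \<open>Reification of the Markov monoid\<close>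

lemma reifies_letter: "reifies Delta (\<lambda>n. [a]) (letter_lw Delta a)"
  unfolding reifies_iff_support
  by (intro exI[of _ "\<lambda>s t. pmf (Delta s a) t"])
    (simp add: word_prob_single letter_lw_def support_lw_def del: word_prob.simps)

lemma reifies_one: "reifies Delta (\<lambda>n. []) lw_one"
  unfolding reifies_iff_support
  by (intro exI[of _ mat_id]) (simp add: mat_id_def lw_one_def support_lw_def)

lemma reifies_concat:
  assumes "reifies Delta us u" and "reifies Delta vs v"
  shows "reifies Delta (\<lambda>n. us n @ vs n) (lw_concat u v)"
proof -
  obtain A B where
    A: "\<And>s t. (\<lambda>n. word_prob Delta (us n) s t) \<longlonglongrightarrow> A s t" "u = support_lw A" and
    B: "\<And>s t. (\<lambda>n. word_prob Delta (vs n) s t) \<longlonglongrightarrow> B s t" "v = support_lw B"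
    using assms unfolding reifies_iff_support by blast
  have "lw_concat u v = support_lw (mat_mul A B)"
    using reifies_limit_stochastic[OF A(1)] reifies_limit_stochastic[OF B(1)] A(2) B(2)
    by (simp add: support_lw_mat_mul stochastic_def)
  moreover have "(\<lambda>n. mat_mul (word_prob Delta (us n)) (word_prob Delta (vs n)) s t) \<longlonglongrightarrow> mat_mul A B s t"
    for s t
    using A(1) B(1) by (rule tendsto_mat_mul)
  ultimately show ?thesis
    unfolding reifies_iff_support word_prob_append by blast
qed

lemma reifies_iter:
  assumes "reifies Delta us u" and "lw_idempotent u"
  shows "\<exists>ws. reifies Delta ws (lw_iter u)"
proof -
  obtain L where L: "\<And>s t. (\<lambda>n. word_prob Delta (us n) s t) \<longlonglongrightarrow> L s t" "u = support_lw L"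
    using assms(1) unfolding reifies_iff_support by blast
  obtain r M where M: "\<And>s t. (\<lambda>j. mat_pow L (r j) s t) \<longlonglongrightarrow> M s t" "lw_iter u = support_lw M"
    using mat_pow_subseq_limit_support[OF reifies_limit_stochastic[OF L(1)] L(2) assms(2)] by blast
  have "(\<lambda>n. case p of (s, t) \<Rightarrow> mat_pow (word_prob Delta (us n)) (r j) s t)
      \<longlonglongrightarrow> (case p of (s, t) \<Rightarrow> mat_pow L (r j) s t)" for j p
    by (cases p) (simp add: tendsto_mat_pow L(1))
  moreover have "(\<lambda>j. case p of (s, t) \<Rightarrow> mat_pow L (r j) s t) \<longlonglongrightarrow> (case p of (s, t) \<Rightarrow> M s t)" for p
    by (cases p) (simp add: M(1))
  ultimately obtain N where N: "\<And>p. (\<lambda>j. case p of (s, t) \<Rightarrow> mat_pow (word_prob Delta (us (N j))) (r j) s t)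
      \<longlonglongrightarrow> (case p of (s, t) \<Rightarrow> M s t)"
    using diagonal_tendsto[where F = "\<lambda>n j p. case p of (s, t) \<Rightarrow> mat_pow (word_prob Delta (us n)) (r j) s t"
        and G = "\<lambda>j p. case p of (s, t) \<Rightarrow> mat_pow L (r j) s t" and H = "\<lambda>p. case p of (s, t) \<Rightarrow> M s t"]
    by blast
  have "(\<lambda>j. word_prob Delta (concat (replicate (r j) (us (N j)))) s t) \<longlonglongrightarrow> M s t" for s t
    using N[of "(s, t)"] by (simp add: word_prob_replicate)
  then show ?thesis
    unfolding reifies_iff_support using M(2)
    by (intro exI[of _ "\<lambda>j. concat (replicate (r j) (us (N j)))"] exI[of _ M]) blast
qed

theorem theorem2p10:
  fixes Delta :: "'q::finite \<Rightarrow> 'a::finite \<Rightarrow> 'q pmf"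
  assumes "u \<in> markov_monoid Delta"
  shows "\<exists>us. reifies Delta us u"
  using assms
proof (induction rule: markov_monoid.induct)
  case (letter a)
  show ?case
    by (rule exI, rule reifies_letter)
next
  case one
  show ?case
    by (rule exI, rule reifies_one)
next
  case (concat u v)
  then show ?case
    using reifies_concat by blast
next
  case (iter u)
  then show ?case
    using reifies_iter by blast
qed

end
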